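(* Suppose $F$ satisfies Assumption 1 and let $v\in[0,1]$ with $F(b^*_{v,F})>0$. Let $W_{v,F}(q)=U_{v,F}(F^{-1}(q))$ for $q\in[0,1]$ and $q^*_{v,F}=F(b^*_{v,F})$. Then for every $q\in[0,1]$, $$W_{v,F}(q^*_{v,F})-W_{v,F}(q)\ \ge\ \frac14\,(q^*_{v,F}-q)^2\,W_{v,F}(q^*_{v,F}).$$
   Context: Assumption 1: $F$ is a cumulative distribution function on $[0,1]$ which is continuously differentiable with density $f=F'$ and is strictly log-concave (equivalently $f/F$ is strictly decreasing on $(0,1)$); in particular $F$ is increasing and has an inverse $F^{-1}$. $U_{v,F}(b)=(v-b)F(b)$ and $b^*_{v,F}=\max\{\operatorname{argmax}_{b\in[0,1]}U_{v,F}(b)\}$. *)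

theory Defs
  imports "HOL-Analysis.Analysis"
begin

text \<open>Assumption 1: F is a CDF on [0,1] (F 0 = 0, F 1 = 1), continuously differentiable
  on [0,1] with density f = F', strictly increasing, and strictly log-concave,
  i.e. f/F strictly decreasing on (0,1).\<close>
definition assumption1 :: "(real \<Rightarrow> real) \<Rightarrow> (real \<Rightarrow> real) \<Rightarrow> bool" where
  "assumption1 F f \<longleftrightarrow>
     F 0 = 0 \<and> F 1 = 1 \<and>
     (\<forall>x\<in>{0..1}. (F has_real_derivative f x) (at x within {0..1})) \<and>
     continuous_on {0..1} f \<and>
     strict_mono_on {0..1} F \<and>
     (\<forall>x y. 0 < x \<longrightarrow> x < y \<longrightarrow> y < 1 \<longrightarrow> f y / F y < f x / F x)"

definition U :: "real \<Rightarrow> (real \<Rightarrow> real) \<Rightarrow> real \<Rightarrow> real" where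
  "U v F b = (v - b) * F b"

definition bstar :: "real \<Rightarrow> (real \<Rightarrow> real) \<Rightarrow> real" where
  "bstar v F = Sup {b \<in> {0..1}. \<forall>c\<in>{0..1}. U v F c \<le> U v F b}"

definition W :: "real \<Rightarrow> (real \<Rightarrow> real) \<Rightarrow> real \<Rightarrow> real" where
  "W v F q = U v F (inv_into {0..1} F q)"

definition qstar :: "real \<Rightarrow> (real \<Rightarrow> real) \<Rightarrow> real" where
  "qstar v F = F (bstar v F)"

end

theory Submission
  imports Defs
begin

text \<open>
  The optimal bid \<open>b\<^sup>*\<close> lies in the open unit interval, so with \<open>q\<^sup>* = F b\<^sup>*\<close> the
  first-order condition \<open>(v - b\<^sup>*) f b\<^sup>* = q\<^sup>*\<close> holds, and log-concavity puts \<open>ln F\<close>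
  below its tangent at \<open>b\<^sup>*\<close>: \<open>ln F b \<le> ln q\<^sup>* + (b - b\<^sup>*) / (v - b\<^sup>*)\<close>. For the
  quantile \<open>q = r q\<^sup>*\<close> of a bid \<open>b\<close> this yields \<open>W q \<le> W q\<^sup>* (r - r ln r)\<close>, hence
  \<open>W q\<^sup>* - W q \<ge> W q\<^sup>* (1 - r + r ln r)\<close>. Elementary bounds on the logarithm give
  \<open>1 - r + r ln r \<ge> (q\<^sup>*)\<^sup>2 (1 - r)\<^sup>2 / 4\<close> whenever \<open>r q\<^sup>* \<le> 1\<close>, and \<open>q\<^sup>* (1 - r) = q\<^sup>* - q\<close>.
\<close>

lemma ln_ge_two_mult_diff_div_add:
  fixes x :: real
  assumes "1 \<le> x"
  shows "2 * (x - 1) / (x + 1) \<le> ln x"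
proof -
  let ?g = "\<lambda>x. ln x - 2 * (x - 1) / (x + 1)"
  have "?g 1 \<le> ?g x"
  proof (rule DERIV_nonneg_imp_nondecreasing[OF assms])
    fix y :: real assume y: "1 \<le> y" "y \<le> x"
    have "(?g has_real_derivative 1 / y - (2 * (y + 1) - 2 * (y - 1)) / (y + 1)\<^sup>2) (at y)"
      using y by (auto intro!: derivative_eq_intros simp: power2_eq_square)
    moreover have "1 / y - (2 * (y + 1) - 2 * (y - 1)) / (y + 1)\<^sup>2 = (y - 1)\<^sup>2 / (y * (y + 1)\<^sup>2)"
      using y by (simp add: divide_simps) (simp add: algebra_simps power2_eq_square)
    ultimately show "\<exists>d. (?g has_real_derivative d) (at y) \<and> 0 \<le> d"
      using y by auto
  qed
  then show ?thesis by simp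
qed

lemma ln_le_half_diff_inverse:
  fixes x :: real
  assumes "1 \<le> x"
  shows "ln x \<le> (x - 1 / x) / 2"
proof -
  let ?g = "\<lambda>x. (x - 1 / x) / 2 - ln x"
  have "?g 1 \<le> ?g x"
  proof (rule DERIV_nonneg_imp_nondecreasing[OF assms])
    fix y :: real assume y: "1 \<le> y" "y \<le> x"
    have "(?g has_real_derivative (y - 1)\<^sup>2 / (2 * y\<^sup>2)) (at y)"
      using y by (auto intro!: derivative_eq_intros simp: field_simps power2_eq_square)
    then show "\<exists>d. (?g has_real_derivative d) (at y) \<and> 0 \<le> d"
      using y by auto
  qed
  then show ?thesis by simp
qed

lemma one_sub_add_mult_ln_ge_square:
  fixes r p :: real
  assumes "0 < r" "0 < p" "p \<le> 1" "r * p \<le> 1"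
  shows "p\<^sup>2 * (1 - r)\<^sup>2 / 4 \<le> 1 - r + r * ln r"
proof (cases "1 \<le> r")
  case True
  have "(r - 1)\<^sup>2 / (r + 1) = 1 - r + r * (2 * (r - 1) / (r + 1))"
    using True by (simp add: field_simps power2_eq_square)
  also have "\<dots> \<le> 1 - r + r * ln r"
    using True ln_ge_two_mult_diff_div_add[OF True] by (intro add_left_mono mult_left_mono) auto
  finally have lower: "(r - 1)\<^sup>2 / (r + 1) \<le> 1 - r + r * ln r" .
  have "p\<^sup>2 * (r + 1) = p * (r * p) + p * p"
    by (simp add: power2_eq_square algebra_simps)
  also have "\<dots> \<le> 4"
    using assms mult_left_le[of "r * p" p] mult_le_one[of p p] by linarith
  finally have "p\<^sup>2 * (r + 1) * (1 - r)\<^sup>2 \<le> 4 * (r - 1)\<^sup>2"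
    by (simp add: power2_commute mult_right_mono)
  then have "p\<^sup>2 * (1 - r)\<^sup>2 / 4 \<le> (r - 1)\<^sup>2 / (r + 1)"
    using True by (simp add: field_simps)
  with lower show ?thesis by linarith
next
  case False
  have "ln (1 / r) \<le> (1 / r - r) / 2"
    using ln_le_half_diff_inverse[of "1 / r"] False assms(1) by simp
  then have "(1 - r)\<^sup>2 / 2 \<le> 1 - r + r * ln r"
    using assms(1) by (simp add: ln_div field_simps power2_eq_square)
  moreover have "p\<^sup>2 * (1 - r)\<^sup>2 \<le> 1 * (1 - r)\<^sup>2"
    using assms by (intro mult_right_mono) (auto simp: power_le_one)
  ultimately show ?thesis using zero_le_power2[of "1 - r"] by linarith
qed

lemma bstar_maximizes_U:
  assumes "continuous_on {0..1} F"
  shows "bstar v F \<in> {0..1}" and "\<And>c. c \<in> {0..1} \<Longrightarrow> U v F c \<le> U v F (bstar v F)"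
proof -
  have cont: "continuous_on {0..1} (U v F)"
    unfolding U_def by (intro continuous_intros assms)
  obtain m where m: "m \<in> {0..1}" "\<And>c. c \<in> {0..1} \<Longrightarrow> U v F c \<le> U v F m"
    using continuous_attains_sup[OF compact_Icc _ cont] by auto
  define S where "S = {b \<in> {0..1}. \<forall>c\<in>{0..1}. U v F c \<le> U v F b}"
  have "S = {b \<in> {0..1}. U v F m \<le> U v F b}"
    unfolding S_def using m order.trans by blast
  moreover have "closed {b \<in> {0..1}. U v F m \<le> U v F b}"
    by (intro continuous_on_closed_Collect_le continuous_on_const cont closed_atLeastAtMost)
  ultimately have "closed S" by simp
  moreover have "S \<noteq> {}" and "bdd_above S"
    using m by (auto simp: S_def intro: bdd_aboveI[of _ 1])
  ultimately have "Sup S \<in> S" by (simp add: closed_contains_Sup)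
  then show "bstar v F \<in> {0..1}" and "\<And>c. c \<in> {0..1} \<Longrightarrow> U v F c \<le> U v F (bstar v F)"
    unfolding bstar_def S_def by auto
qed

context
  fixes F f :: "real \<Rightarrow> real"
  assumes cdf: "assumption1 F f"
begin

lemma F_0: "F 0 = 0" and F_1: "F 1 = 1"
  and F_strict_mono_on: "strict_mono_on {0..1} F"
  and F_log_derivative_decreasing: "\<And>x y. 0 < x \<Longrightarrow> x < y \<Longrightarrow> y < 1 \<Longrightarrow> f y / F y < f x / F x"
  using cdf unfolding assumption1_def by auto

lemma F_continuous_on: "continuous_on {0..1} F"
  using cdf DERIV_continuous unfolding assumption1_def continuous_on_eq_continuous_within by blast

lemma F_has_derivative_interior:
  assumes "x \<in> {0<..<1}"
  shows "(F has_real_derivative f x) (at x)"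
proof -
  have "(F has_real_derivative f x) (at x within {0..1})"
    using cdf assms unfolding assumption1_def by auto
  moreover have "at x within {0..1} = at x"
    using assms by (intro at_within_interior) auto
  ultimately show ?thesis by simp
qed

lemma F_pos:
  assumes "0 < x" "x \<le> 1"
  shows "0 < F x"
  using strict_mono_onD[OF F_strict_mono_on, of 0 x] assms F_0 by auto

lemma F_bij_betw: "bij_betw F {0..1} {0..1}"
proof -
  have "F x \<in> {0..1}" if "x \<in> {0..1}" for x
    using strict_mono_on_leD[OF F_strict_mono_on, of 0 x] strict_mono_on_leD[OF F_strict_mono_on, of x 1]
      that F_0 F_1 by auto
  then have "F ` {0..1} \<subseteq> {0..1}" by blast
  moreover have "{0..1} \<subseteq> F ` {0..1}"
  proof
    fix y :: real assume "y \<in> {0..1}"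
    then obtain x where "0 \<le> x" "x \<le> 1" "F x = y"
      using IVT'[of F 0 y 1] F_0 F_1 F_continuous_on by auto
    then show "y \<in> F ` {0..1}" by force
  qed
  ultimately have "F ` {0..1} = {0..1}" by blast
  then show ?thesis
    using strict_mono_on_imp_inj_on[OF F_strict_mono_on] by (simp add: bij_betw_def)
qed

lemma ln_F_le_tangent:
  assumes "b \<in> {0<..<1}" "c \<in> {0<..<1}"
  shows "ln (F b) \<le> ln (F c) + f c / F c * (b - c)"
proof -
  have deriv: "((\<lambda>x. - ln (F x)) has_real_derivative - (f x / F x)) (at x)"
    if "x \<in> {0<..<1}" for x
    using that F_pos[of x] by (auto intro!: derivative_eq_intros F_has_derivative_interior)
  have "convex_on {0<..<1} (\<lambda>x. - ln (F x))"
  proof (rule convex_on_realI[OF _ deriv])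
    fix x y :: real assume "x \<in> {0<..<1}" "y \<in> {0<..<1}" "x \<le> y"
    then show "- (f x / F x) \<le> - (f y / F y)"
      using F_log_derivative_decreasing[of x y] by (cases "x = y") auto
  qed auto
  then have "- (f c / F c) * (b - c) \<le> - ln (F b) - - ln (F c)"
    by (rule convex_on_imp_above_tangent)
      (use assms deriv in \<open>auto simp: has_field_derivative_at_within\<close>)
  then show ?thesis by simp
qed

lemma bstar_in_open_unit_interval:
  assumes "v \<le> 1" "0 < F (bstar v F)"
  shows "bstar v F \<in> {0<..<1}"
proof -
  let ?b = "bstar v F"
  have b: "?b \<in> {0..1}" "\<And>c. c \<in> {0..1} \<Longrightarrow> U v F c \<le> U v F ?b"
    using bstar_maximizes_U[OF F_continuous_on] by auto
  have "?b \<noteq> 0" using assms(2) F_0 by auto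
  moreover have "?b \<noteq> 1"
  proof -
    define c where "c = (if v < 1 then 0 else 1 / 2 :: real)"
    have "c \<in> {0..1}" "U v F 1 < U v F c"
      using assms(1) F_0 F_1 F_pos[of "1 / 2"] by (auto simp: c_def U_def)
    then show ?thesis using b(2)[of c] by auto
  qed
  ultimately show ?thesis using b(1) by auto
qed

lemma bstar_first_order_condition:
  assumes "v \<le> 1" "0 < F (bstar v F)"
  shows "(v - bstar v F) * f (bstar v F) = F (bstar v F)"
proof -
  let ?b = "bstar v F"
  have b: "?b \<in> {0<..<1}"
    using bstar_in_open_unit_interval[OF assms] .
  have deriv: "(U v F has_real_derivative - F ?b + (v - ?b) * f ?b) (at ?b)"
    unfolding U_def[abs_def]
    by (auto intro!: derivative_eq_intros F_has_derivative_interior[OF b])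
  have max: "\<forall>y. \<bar>?b - y\<bar> < min ?b (1 - ?b) \<longrightarrow> U v F y \<le> U v F ?b"
    using bstar_maximizes_U(2)[OF F_continuous_on] by (auto simp: abs_less_iff)
  have "- F ?b + (v - ?b) * f ?b = 0"
    using DERIV_local_max[OF deriv _ max] b by simp
  then show ?thesis by simp
qed

lemma bstar_less_v:
  assumes "v \<le> 1" "0 < F (bstar v F)"
  shows "bstar v F < v"
proof -
  let ?b = "bstar v F"
  have "0 \<le> (v - ?b) * F ?b"
    using bstar_maximizes_U(2)[OF F_continuous_on, of 0 v] F_0 by (simp add: U_def)
  moreover have "v \<noteq> ?b"
    using bstar_first_order_condition[OF assms] assms(2) by auto
  ultimately show ?thesis
    using assms(2) by (simp add: zero_le_mult_iff)
qed

lemma W_eq: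
  assumes "q \<in> {0..1}"
  shows "W v F q = (v - inv_into {0..1} F q) * q"
  using assms F_bij_betw by (simp add: W_def U_def bij_betw_inv_into_right)

lemma W_0: "W v F 0 = 0"
  using W_eq[of 0] by simp

lemma W_1: "W v F 1 = v - 1"
  using W_eq[of 1] inv_into_f_f[OF bij_betw_imp_inj_on[OF F_bij_betw], of 1] F_1 by simp

lemma W_qstar: "W v F (qstar v F) = (v - bstar v F) * qstar v F"
  using bstar_maximizes_U(1)[OF F_continuous_on] F_bij_betw
  by (simp add: W_def U_def qstar_def bij_betw_def)

lemma W_le_W_qstar_mult:
  assumes "v \<le> 1" "0 < F (bstar v F)" "q \<in> {0<..<1}"
  defines "r \<equiv> q / qstar v F"
  shows "W v F q \<le> W v F (qstar v F) * (r - r * ln r)"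
proof -
  let ?b = "bstar v F" and ?B = "inv_into {0..1} F q"
  have b: "?b \<in> {0<..<1}" and vb: "0 < v - ?b"
    using bstar_in_open_unit_interval[OF assms(1,2)] bstar_less_v[OF assms(1,2)] by auto
  have q_img: "q \<in> F ` {0..1}"
    using assms(3) F_bij_betw by (auto simp: bij_betw_def)
  then have FB: "F ?B = q" by (rule f_inv_into_f)
  have "?B \<in> {0..1}" using q_img by (rule inv_into_into)
  then have B: "?B \<in> {0<..<1}"
    using FB F_0 F_1 assms(3) by (cases "?B = 0 \<or> ?B = 1") auto
  have "ln q \<le> ln (F ?b) + f ?b / F ?b * (?B - ?b)"
    using ln_F_le_tangent[OF B b] FB by simp
  also have "f ?b / F ?b = 1 / (v - ?b)"
    using bstar_first_order_condition[OF assms(1,2)] vb assms(2) by (simp add: field_simps)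
  finally have "(v - ?b) * ln r \<le> ?B - ?b"
    using vb assms(2,3) by (simp add: r_def qstar_def ln_div field_simps)
  then have "(v - ?B) * q \<le> (v - ?b - (v - ?b) * ln r) * q"
    using assms(3) by (intro mult_right_mono) auto
  also have "\<dots> = (v - ?b) * qstar v F * (r - r * ln r)"
    using assms(2) by (simp add: r_def qstar_def field_simps)
  finally show ?thesis
    using assms(3) by (simp add: W_eq W_qstar)
qed

end

theorem lemma5:
  fixes F f :: "real \<Rightarrow> real" and v q :: real
  assumes "assumption1 F f"
    and "v \<in> {0..1}"
    and "F (bstar v F) > 0"
    and "q \<in> {0..1}"
  shows "W v F (qstar v F) - W v F q \<ge> 1/4 * (qstar v F - q)^2 * W v F (qstar v F)"
proof -
  let ?qs = "qstar v F" and ?Ws = "W v F (qstar v F)"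
  have v: "v \<le> 1" using assms(2) by simp
  have qs: "0 < ?qs" "?qs \<le> 1"
    using assms(3) bstar_in_open_unit_interval[OF assms(1) v assms(3)]
      F_bij_betw[OF assms(1)] by (auto simp: qstar_def bij_betw_def)
  have Ws: "0 < ?Ws"
    using W_qstar[OF assms(1)] bstar_less_v[OF assms(1) v assms(3)] qs by simp
  consider "q = 0 \<or> q = 1" | "q \<in> {0<..<1}" using assms(4) by fastforce
  then show ?thesis
  proof cases
    case 1
    then have "W v F q \<le> 0"
      using v W_0[OF assms(1)] W_1[OF assms(1)] by auto
    moreover have "(?qs - q)\<^sup>2 \<le> 1"
      using 1 qs by (auto simp: power_le_one abs_square_le_1)
    ultimately show ?thesis
      using Ws mult_right_mono[of "(?qs - q)\<^sup>2" 1 ?Ws] by linarith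
  next
    case 2
    define r where "r = q / ?qs"
    have "1/4 * (?qs - q)^2 * ?Ws = ?Ws * (?qs\<^sup>2 * (1 - r)\<^sup>2 / 4)"
      using qs by (simp add: r_def field_simps)
    also have "\<dots> \<le> ?Ws * (1 - r + r * ln r)"
      using 2 qs Ws by (intro mult_left_mono one_sub_add_mult_ln_ge_square) (auto simp: r_def)
    also have "\<dots> \<le> ?Ws - W v F q"
      using W_le_W_qstar_mult[OF assms(1) v assms(3) 2] by (simp add: r_def algebra_simps)
    finally show ?thesis .
  qed
qed

end
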